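(* Let $H_1$ and $H_2$ be atomic hypergraphs with $\mathcal A(H_1)$ and $\mathcal A(H_2)$ of ranks $r_1$ and $r_2$, and let $k$ be an integer with $-1\le k\le \min(r_1,r_2)-1$. If the set of faces of rank $k$ of $\mathcal A(H_1)$ equals the set of faces of rank $k$ of $\mathcal A(H_2)$, then $\mathcal A(H_1)=\mathcal A(H_2)$.
   Context: A hypergraph is a finite set $H$ of nonempty subsets of some finite set; its carrier is $\bigcup H$. For a family $F$ and set $Y$, $F_Y=\{X\in F\mid X\subseteq Y\}$. A hypergraph partition of $H$ is a partition $\{H_1,\dots,H_n\}$ ($n\ge0$) of the set $H$ with $\{\bigcup H_1,\dots,\bigcup H_n\}$ a partition of $\bigcup H$; $H$ is connected if it has exactly one hypergraph partition; the finest hypergraph partition is the unique one whose blocks are connected; the sets $\bigcup H_i$ for its blocks are the connected components of the carrier, and their number $n$ is the connectedness number. $H$ is atomic if $\{x\}\in H$ for all $x\in\bigcup H$. Constructions of an atomic $H$, by induction on $|\bigcup H|$: (0) $\emptyset$ is the only construction of $\emptyset$; (1) if $|\bigcup H|\ge1$, $H$ connected, $x\in\bigcup H$, $K$ a construction of $H_{\bigcup H\setminus\{x\}}$, then $K\cup\{\bigcup H\}$ is a construction of $H$; (2) if $H$ is not connected with finest hypergraph partition $\{H_1,\dots,H_n\}$, $n\ge2$, and $K_i$ is a construction of $H_i$, then $K_1\cup\dots\cup K_n$ is a construction of $H$. A construct of $H$ is a subset of a construction of $H$ containing every connected component of $\bigcup H$. $H$ is saturated if $X_1,X_2\in H$,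 $X_1\cap X_2\ne\emptyset$ imply $X_1\cup X_2\in H$. $Y\subseteq\bigcup H$ is dispensable in $H$ if $H_Y\setminus\{Y\}$ is a connected hypergraph with carrier $Y$; hypergraphs on the same carrier are cognate if related by the equivalence relation generated by $H\sim H\cup\{Y\}$ for $Y$ dispensable in $H$; the saturated closure $\bar H$ is the unique saturated hypergraph cognate to $H$. The poset $\mathcal A(H)$ has as elements all constructs of $H$ together with $\bar H^*=\bar H\cup\{*\}$ ($*$ a fixed new element not in any carrier), ordered by $C_1\le C_2$ iff $C_2\subseteq C_1$. Its rank is $r=|\bigcup H|-n$; for $0\le k\le r$ the faces of rank $k$ are the constructs of cardinality $|\bigcup H|-k$, and $\bar H^*$ is the unique face of rank $-1$. *)

theory Defs
  imports Main
begin

definition hypergraph :: "'a set set \<Rightarrow> bool" where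
  "hypergraph H \<longleftrightarrow> finite H \<and> finite (\<Union>H) \<and> (\<forall>X\<in>H. X \<noteq> {})"

definition restr :: "'a set set \<Rightarrow> 'a set \<Rightarrow> 'a set set" where
  "restr F Y = {X \<in> F. X \<subseteq> Y}"

definition hypergraph_partition :: "'a set set \<Rightarrow> 'a set set set \<Rightarrow> bool" where
  "hypergraph_partition H P \<longleftrightarrow>
     (\<forall>B\<in>P. B \<noteq> {}) \<and> \<Union>P = H \<and>
     (\<forall>B1\<in>P. \<forall>B2\<in>P. B1 \<noteq> B2 \<longrightarrow> B1 \<inter> B2 = {}) \<and>
     (\<forall>B1\<in>P. \<forall>B2\<in>P. B1 \<noteq> B2 \<longrightarrow> \<Union>B1 \<inter> \<Union>B2 = {})"

definition connected_hg :: "'a set set \<Rightarrow> bool" where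
  "connected_hg H \<longleftrightarrow> (\<exists>!P. hypergraph_partition H P)"

definition finest_partition :: "'a set set \<Rightarrow> 'a set set set" where
  "finest_partition H = (THE P. hypergraph_partition H P \<and> (\<forall>B\<in>P. connected_hg B))"

definition components :: "'a set set \<Rightarrow> 'a set set" where
  "components H = (\<lambda>B. \<Union>B) ` finest_partition H"

definition connectedness_number :: "'a set set \<Rightarrow> nat" where
  "connectedness_number H = card (finest_partition H)"

definition atomic :: "'a set set \<Rightarrow> bool" where
  "atomic H \<longleftrightarrow> (\<forall>x\<in>\<Union>H. {x} \<in> H)"

inductive construction :: "'a set set \<Rightarrow> 'a set set \<Rightarrow> bool" where
  empty: "construction {} {}"
| conn: "\<lbrakk> card (\<Union>H) \<ge> 1; connected_hg H; x \<in> \<Union>H;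
           construction (restr H (\<Union>H - {x})) K \<rbrakk>
         \<Longrightarrow> construction H (insert (\<Union>H) K)"
| disconn: "\<lbrakk> \<not> connected_hg H; finest_partition H = P; card P \<ge> 2;
              \<forall>B\<in>P. construction B (K B) \<rbrakk>
         \<Longrightarrow> construction H (\<Union>B\<in>P. K B)"

definition construct :: "'a set set \<Rightarrow> 'a set set \<Rightarrow> bool" where
  "construct H C \<longleftrightarrow> (\<exists>K. construction H K \<and> C \<subseteq> K) \<and> components H \<subseteq> C"

definition saturated :: "'a set set \<Rightarrow> bool" where
  "saturated H \<longleftrightarrow> (\<forall>X1\<in>H. \<forall>X2\<in>H. X1 \<inter> X2 \<noteq> {} \<longrightarrow> X1 \<union> X2 \<in> H)"

definition dispensable :: "'a set set \<Rightarrow> 'a set \<Rightarrow> bool" where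
  "dispensable H Y \<longleftrightarrow> Y \<subseteq> \<Union>H \<and>
     connected_hg (restr H Y - {Y}) \<and> \<Union>(restr H Y - {Y}) = Y"

definition add_dispensable :: "'a set set \<Rightarrow> 'a set set \<Rightarrow> bool" where
  "add_dispensable H H' \<longleftrightarrow> (\<exists>Y. Y \<noteq> {} \<and> dispensable H Y \<and> H' = H \<union> {Y})"

definition cognate :: "'a set set \<Rightarrow> 'a set set \<Rightarrow> bool" where
  "cognate = (sup add_dispensable add_dispensable\<inverse>\<inverse>)\<^sup>*\<^sup>*"

definition sat_closure :: "'a set set \<Rightarrow> 'a set set" where
  "sat_closure H = (THE S. hypergraph S \<and> saturated S \<and> cognate H S)"

text \<open>Elements of A(H) are encoded as sets of type 'a set option: a construct C is
  encoded as Some ` C, and the new element * is None, so that H-bar-star is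
  insert None (Some ` H-bar). The order is reverse inclusion, hence determined by
  the set of elements.\<close>

definition satstar :: "'a set set \<Rightarrow> 'a set option set" where
  "satstar H = insert None (Some ` sat_closure H)"

definition A_poset :: "'a set set \<Rightarrow> 'a set option set set" where
  "A_poset H = {Some ` C | C. construct H C} \<union> {satstar H}"

definition A_rank :: "'a set set \<Rightarrow> int" where
  "A_rank H = int (card (\<Union>H)) - int (connectedness_number H)"

definition faces :: "'a set set \<Rightarrow> int \<Rightarrow> 'a set option set set" where
  "faces H k =
     (if k = -1 then {satstar H}
      else if 0 \<le> k \<and> k \<le> A_rank H then
        {Some ` C | C. construct H C \<and> int (card C) = int (card (\<Union>H)) - k}
      else {})"

end

theory Submission
  imports Defs
begin

(* The proof goes through the family conn_sets H of connected subsets of the carrier,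
   i.e. the nonempty sets Y for which H_Y is connected with carrier Y.
   (1) conn_sets H is the saturated closure of H, and the connected components of the
       carrier are exactly the maximal connected sets.
   (2) Whether K is a construction of H depends only on conn_sets H (induction on
       constructions); hence the constructs of H and H-bar* depend only on conn_sets H.
   (3) Conversely, conn_sets H can be read off the faces of rank k: for k = -1 the only
       face is H-bar*; for 0 <= k <= r - 1 every connected set Y lies in a construct of
       cardinality |carrier| - k, because a construction consists of exactly |carrier|
       connected sets including the n components (atomicity is used here), leaving room
       to keep Y besides the components. *)

definition split_hg :: "'a set set \<Rightarrow> bool" where
  "split_hg H \<longleftrightarrow> (\<exists>A B. A \<noteq> {} \<and> B \<noteq> {} \<and> A \<union> B = H \<and> A \<inter> B = {} \<and> \<Union>A \<inter> \<Union>B = {})"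

lemma connected_iff_no_split: "connected_hg H \<longleftrightarrow> \<not> split_hg H"
proof
  assume c: "connected_hg H"
  show "\<not> split_hg H"
  proof
    assume "split_hg H"
    then obtain A B where AB: "A \<noteq> {}" "B \<noteq> {}" "A \<union> B = H" "A \<inter> B = {}" "\<Union>A \<inter> \<Union>B = {}"
      unfolding split_hg_def by blast
    have p1: "hypergraph_partition H {H}" using AB unfolding hypergraph_partition_def by auto
    have "A \<noteq> B" using AB by auto
    hence p2: "hypergraph_partition H {A,B}" using AB unfolding hypergraph_partition_def by auto
    have "{A,B} \<noteq> {H}" using AB by auto
    thus False using c p1 p2 unfolding connected_hg_def by blast
  qed
next
  assume ns: "\<not> split_hg H"
  show "connected_hg H"
  proof (cases "H = {}")
    case True
    hence "hypergraph_partition H P \<longleftrightarrow> P = {}" for P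
      unfolding hypergraph_partition_def by auto
    thus ?thesis unfolding connected_hg_def by blast
  next
    case False
    have "P = {H}" if hp: "hypergraph_partition H P" for P
    proof -
      have "B = H" if B: "B \<in> P" for B
      proof (rule ccontr)
        assume ne: "B \<noteq> H"
        have sub: "B \<subseteq> H" and "B \<noteq> {}" using hp B unfolding hypergraph_partition_def by auto
        moreover have "\<Union>B \<inter> \<Union>(H - B) = {}"
          using hp B unfolding hypergraph_partition_def by blast
        moreover have "H - B \<noteq> {}" using ne sub by auto
        ultimately have "split_hg H" unfolding split_hg_def
          by (rule_tac x=B in exI, rule_tac x="H - B" in exI) auto
        thus False using ns by simp
      qed
      moreover have "P \<noteq> {}" using hp False unfolding hypergraph_partition_def by auto
      ultimately show ?thesis by auto
    qed
    moreover have "hypergraph_partition H {H}" using False unfolding hypergraph_partition_def by auto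
    ultimately show ?thesis unfolding connected_hg_def by blast
  qed
qed

lemma connected_in_split_side:
  assumes "connected_hg G" "A \<inter> B = {}" "\<Union>A \<inter> \<Union>B = {}" "G \<subseteq> A \<union> B"
  shows "G \<subseteq> A \<or> G \<subseteq> B"
proof (rule ccontr)
  assume "\<not> (G \<subseteq> A \<or> G \<subseteq> B)"
  hence "G \<inter> A \<noteq> {}" "G \<inter> B \<noteq> {}" using assms(4) by auto
  hence "split_hg G" unfolding split_hg_def
    by (rule_tac x="G \<inter> A" in exI, rule_tac x="G \<inter> B" in exI) (use assms in auto)
  thus False using assms(1) connected_iff_no_split by blast
qed

lemma connected_superset:
  assumes "connected_hg G" "G \<subseteq> G'" "\<Union>G' = \<Union>G" "\<forall>X\<in>G'. X \<noteq> {}"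
  shows "connected_hg G'"
  unfolding connected_iff_no_split
proof
  assume "split_hg G'"
  then obtain A B where AB: "A \<noteq> {}" "B \<noteq> {}" "A \<union> B = G'" "A \<inter> B = {}" "\<Union>A \<inter> \<Union>B = {}"
    unfolding split_hg_def by blast
  have "G \<subseteq> A \<or> G \<subseteq> B" using connected_in_split_side[OF assms(1) AB(4,5)] AB(3) assms(2) by blast
  hence "\<Union>G' \<subseteq> \<Union>A \<or> \<Union>G' \<subseteq> \<Union>B" using assms(3) by auto
  hence "\<Union>B \<subseteq> \<Union>A \<or> \<Union>A \<subseteq> \<Union>B" using AB(3) by auto
  hence "\<Union>B = {} \<or> \<Union>A = {}" using AB(5) by blast
  thus False using AB(1-3) assms(4) by blast
qed

lemma connected_Un:
  assumes "connected_hg G1" "connected_hg G2" "\<Union>G1 \<inter> \<Union>G2 \<noteq> {}"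
  shows "connected_hg (G1 \<union> G2)"
  unfolding connected_iff_no_split
proof
  assume "split_hg (G1 \<union> G2)"
  then obtain A B where AB: "A \<noteq> {}" "B \<noteq> {}" "A \<union> B = G1 \<union> G2" "A \<inter> B = {}" "\<Union>A \<inter> \<Union>B = {}"
    unfolding split_hg_def by blast
  have 1: "G1 \<subseteq> A \<or> G1 \<subseteq> B" and 2: "G2 \<subseteq> A \<or> G2 \<subseteq> B"
    using connected_in_split_side[OF assms(1) AB(4,5)] connected_in_split_side[OF assms(2) AB(4,5)]
      AB(3) by auto
  have "\<not> (G1 \<subseteq> A \<and> G2 \<subseteq> B)" "\<not> (G1 \<subseteq> B \<and> G2 \<subseteq> A)"
    using AB(5) assms(3) Union_mono by blast+
  moreover have "\<not> (G1 \<subseteq> A \<and> G2 \<subseteq> A)" "\<not> (G1 \<subseteq> B \<and> G2 \<subseteq> B)"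
    using AB(1-4) by blast+
  ultimately show False using 1 2 by blast
qed

lemma connected_singleton: "connected_hg {X}"
  unfolding connected_iff_no_split split_hg_def
  by (auto simp: subset_singleton_iff Un_singleton_iff)

lemma connected_empty: "connected_hg {}"
  unfolding connected_iff_no_split split_hg_def by blast

text \<open>If every edge Z of a connected hypergraph G is itself covered connectedly by the
  edges of F inside Z, then F is connected: a split of F would induce a split of G.\<close>
lemma connected_refinement:
  assumes G: "connected_hg G" and FG: "F \<subseteq> G"
    and cover: "\<And>Z. Z \<in> G \<Longrightarrow> connected_hg (restr F Z) \<and> \<Union>(restr F Z) = Z"
  shows "connected_hg F"
  unfolding connected_iff_no_split
proof
  assume "split_hg F"
  then obtain A B where AB: "A \<noteq> {}" "B \<noteq> {}" "A \<union> B = F" "A \<inter> B = {}" "\<Union>A \<inter> \<Union>B = {}"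
    unfolding split_hg_def by blast
  have side: "restr F Z \<subseteq> A \<or> restr F Z \<subseteq> B" if "Z \<in> G" for Z
  proof (rule connected_in_split_side[OF _ AB(4,5)])
    show "connected_hg (restr F Z)" using cover[OF that] by simp
    show "restr F Z \<subseteq> A \<union> B" using AB(3) unfolding restr_def by auto
  qed
  define A' where "A' = {Z \<in> G. restr F Z \<subseteq> A}"
  define B' where "B' = {Z \<in> G. \<not> restr F Z \<subseteq> A}"
  have "\<Union>A' \<subseteq> \<Union>A"
  proof (rule Union_least)
    fix Z assume "Z \<in> A'"
    hence "Z = \<Union>(restr F Z)" "restr F Z \<subseteq> A" using cover unfolding A'_def by auto
    thus "Z \<subseteq> \<Union>A" by blast
  qed
  moreover have "\<Union>B' \<subseteq> \<Union>B"
  proof (rule Union_least)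
    fix Z assume "Z \<in> B'"
    hence "Z = \<Union>(restr F Z)" "restr F Z \<subseteq> B" using cover side unfolding B'_def by auto
    thus "Z \<subseteq> \<Union>B" by blast
  qed
  ultimately have disj: "\<Union>A' \<inter> \<Union>B' = {}" using AB(5) by blast
  have self: "W \<in> restr F W" if "W \<in> F" for W
    using that unfolding restr_def by simp
  have "A' \<inter> B' = {}" unfolding A'_def B'_def by blast
  moreover have "G \<subseteq> A' \<union> B'" using side unfolding A'_def B'_def by blast
  ultimately have "G \<subseteq> A' \<or> G \<subseteq> B'" using connected_in_split_side[OF G _ disj] by blast
  moreover obtain WA WB where "WA \<in> A" "WB \<in> B" using AB(1,2) by blast
  ultimately show False
    using self side AB(3,4) FG unfolding A'_def B'_def by blast
qed

text \<open>The connected sets of H: nonempty sets Y such that the edges of H inside Y form a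
  connected hypergraph with carrier Y. They will turn out to form the saturated closure.\<close>
definition conn_sets :: "'a set set \<Rightarrow> 'a set set" where
  "conn_sets H = {Y. Y \<noteq> {} \<and> connected_hg (restr H Y) \<and> \<Union>(restr H Y) = Y}"

lemma restr_restr: "Y \<subseteq> W \<Longrightarrow> restr (restr H W) Y = restr H Y"
  unfolding restr_def by auto

lemma restr_carrier: "restr H (\<Union>H) = H"
  unfolding restr_def by auto

lemma hypergraph_restr: "hypergraph H \<Longrightarrow> hypergraph (restr H W)"
  unfolding hypergraph_def restr_def by (auto intro: finite_subset[of _ "\<Union>H"])

lemma atomic_restr: "atomic H \<Longrightarrow> atomic (restr H W)"
  unfolding atomic_def restr_def by auto

lemma Union_restr_conn_set: "Y \<in> conn_sets H \<Longrightarrow> \<Union>(restr H Y) = Y"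
  unfolding conn_sets_def by simp

lemma conn_sets_subset: "Y \<in> conn_sets H \<Longrightarrow> Y \<subseteq> \<Union>H"
  unfolding conn_sets_def restr_def by auto

lemma conn_sets_nonempty: "Y \<in> conn_sets H \<Longrightarrow> Y \<noteq> {}"
  unfolding conn_sets_def by auto

lemma finite_conn_sets: "finite (\<Union>H) \<Longrightarrow> finite (conn_sets H)"
  by (rule finite_subset[of _ "Pow (\<Union>H)"]) (auto dest: conn_sets_subset)

lemma conn_sets_empty: "conn_sets {} = {}"
  using conn_sets_subset conn_sets_nonempty by fastforce

lemma conn_sets_restr: "conn_sets (restr H W) = {Y \<in> conn_sets H. Y \<subseteq> W}"
proof (intro equalityI subsetI)
  fix Y assume Y: "Y \<in> conn_sets (restr H W)"
  have "\<Union>(restr (restr H W) Y) \<subseteq> W" unfolding restr_def by auto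
  hence "Y \<subseteq> W" using Union_restr_conn_set[OF Y] by simp
  thus "Y \<in> {Y \<in> conn_sets H. Y \<subseteq> W}" using Y unfolding conn_sets_def by (simp add: restr_restr)
next
  fix Y assume "Y \<in> {Y \<in> conn_sets H. Y \<subseteq> W}"
  hence "Y \<in> conn_sets H" "Y \<subseteq> W" by simp_all
  thus "Y \<in> conn_sets (restr H W)" unfolding conn_sets_def by (simp add: restr_restr)
qed

lemma edge_in_conn_sets:
  assumes "\<forall>X\<in>H. X \<noteq> {}" "X \<in> H" shows "X \<in> conn_sets H"
proof -
  have u: "\<Union>(restr H X) = X" using assms unfolding restr_def by auto
  have "connected_hg (restr H X)"
  proof (rule connected_superset[OF connected_singleton])
    show "{X} \<subseteq> restr H X" using assms(2) unfolding restr_def by simp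
    show "\<Union>(restr H X) = \<Union>{X}" using u by simp
    show "\<forall>Z\<in>restr H X. Z \<noteq> {}" using assms(1) unfolding restr_def by simp
  qed
  thus ?thesis using assms u unfolding conn_sets_def by auto
qed

lemma conn_sets_empty_iff:
  "\<forall>X\<in>H. X \<noteq> {} \<Longrightarrow> conn_sets H = {} \<longleftrightarrow> H = {}"
  using edge_in_conn_sets[of H] conn_sets_empty by blast

lemma Union_conn_sets: assumes "\<forall>X\<in>H. X \<noteq> {}" shows "\<Union>(conn_sets H) = \<Union>H"
  using conn_sets_subset edge_in_conn_sets[OF assms] by blast

lemma connected_iff_carrier_conn_set:
  assumes "H \<noteq> {}" "\<forall>X\<in>H. X \<noteq> {}"
  shows "connected_hg H \<longleftrightarrow> \<Union>H \<in> conn_sets H"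
  using assms unfolding conn_sets_def by (auto simp: restr_carrier)

lemma conn_sets_Un:
  assumes ne: "\<forall>X\<in>H. X \<noteq> {}" and Y: "Y1 \<in> conn_sets H" "Y2 \<in> conn_sets H" and i: "Y1 \<inter> Y2 \<noteq> {}"
  shows "Y1 \<union> Y2 \<in> conn_sets H"
proof -
  have c: "connected_hg (restr H Y1)" "\<Union>(restr H Y1) = Y1"
          "connected_hg (restr H Y2)" "\<Union>(restr H Y2) = Y2"
    using Y unfolding conn_sets_def by auto
  have sub: "restr H Y1 \<union> restr H Y2 \<subseteq> restr H (Y1 \<union> Y2)" unfolding restr_def by auto
  have u: "\<Union>(restr H (Y1 \<union> Y2)) = Y1 \<union> Y2"
  proof
    show "\<Union>(restr H (Y1 \<union> Y2)) \<subseteq> Y1 \<union> Y2" unfolding restr_def by auto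
    have "Y1 \<union> Y2 = \<Union>(restr H Y1 \<union> restr H Y2)" using c(2,4) by simp
    also have "\<dots> \<subseteq> \<Union>(restr H (Y1 \<union> Y2))" using sub by (rule Union_mono)
    finally show "Y1 \<union> Y2 \<subseteq> \<Union>(restr H (Y1 \<union> Y2))" .
  qed
  have "connected_hg (restr H (Y1 \<union> Y2))"
  proof (rule connected_superset[OF connected_Un[OF c(1,3)] sub])
    show "\<Union>(restr H Y1) \<inter> \<Union>(restr H Y2) \<noteq> {}" using c(2,4) i by simp
    show "\<Union>(restr H (Y1 \<union> Y2)) = \<Union>(restr H Y1 \<union> restr H Y2)" using u c(2,4) by simp
    show "\<forall>X\<in>restr H (Y1 \<union> Y2). X \<noteq> {}" using ne unfolding restr_def by simp
  qed
  thus ?thesis using u i unfolding conn_sets_def by auto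
qed

text \<open>Adding connected sets to H does not change its connected sets. This is what makes
  conn_sets H invariant under the cognate relation.\<close>
lemma conn_sets_between:
  assumes ne: "\<forall>X\<in>H. X \<noteq> {}" and HG: "H \<subseteq> G" and GC: "G \<subseteq> conn_sets H"
  shows "conn_sets G = conn_sets H"
proof (intro equalityI subsetI)
  fix Y assume "Y \<in> conn_sets H"
  hence c: "Y \<noteq> {}" "connected_hg (restr H Y)" "\<Union>(restr H Y) = Y" unfolding conn_sets_def by auto
  have u: "\<Union>(restr G Y) = Y" using c(3) HG unfolding restr_def by blast
  have "connected_hg (restr G Y)"
  proof (rule connected_superset[OF c(2)])
    show "restr H Y \<subseteq> restr G Y" using HG unfolding restr_def by auto
    show "\<Union>(restr G Y) = \<Union>(restr H Y)" using u c(3) by simp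
    show "\<forall>X\<in>restr G Y. X \<noteq> {}" using GC conn_sets_nonempty unfolding restr_def by blast
  qed
  thus "Y \<in> conn_sets G" using u c unfolding conn_sets_def by auto
next
  fix Y assume "Y \<in> conn_sets G"
  hence c: "Y \<noteq> {}" "connected_hg (restr G Y)" "\<Union>(restr G Y) = Y" unfolding conn_sets_def by auto
  have Zc: "connected_hg (restr (restr H Y) Z) \<and> \<Union>(restr (restr H Y) Z) = Z"
    if "Z \<in> restr G Y" for Z
  proof -
    have "Z \<in> conn_sets H" "Z \<subseteq> Y" using that GC unfolding restr_def by auto
    thus ?thesis unfolding conn_sets_def by (simp add: restr_restr)
  qed
  have "connected_hg (restr H Y)"
    by (rule connected_refinement[OF c(2) _ Zc]) (use HG in \<open>auto simp: restr_def\<close>)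
  moreover have "Y \<subseteq> \<Union>(restr H Y)"
  proof
    fix y assume "y \<in> Y"
    then obtain Z where "Z \<in> restr G Y" "y \<in> Z" using c(3) by blast
    thus "y \<in> \<Union>(restr H Y)" using Zc[of Z] unfolding restr_def by blast
  qed
  hence "\<Union>(restr H Y) = Y" unfolding restr_def by blast
  ultimately show "Y \<in> conn_sets H" using c(1) unfolding conn_sets_def by auto
qed

text \<open>The maximal connected sets; they are the connected components of the carrier.\<close>
definition max_conn_sets :: "'a set set \<Rightarrow> 'a set set" where
  "max_conn_sets H = {C \<in> conn_sets H. \<forall>Y\<in>conn_sets H. C \<subseteq> Y \<longrightarrow> Y = C}"

lemma max_conn_sets_conn_sets: "C \<in> max_conn_sets H \<Longrightarrow> C \<in> conn_sets H"
  unfolding max_conn_sets_def by simp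

lemma max_conn_sets_cong: "conn_sets H1 = conn_sets H2 \<Longrightarrow> max_conn_sets H1 = max_conn_sets H2"
  unfolding max_conn_sets_def by simp

lemma finite_max_conn_sets: "finite (\<Union>H) \<Longrightarrow> finite (max_conn_sets H)"
  by (rule finite_subset[OF _ finite_conn_sets]) (auto simp: max_conn_sets_def)

lemma max_conn_set_exists:
  assumes fin: "finite (\<Union>H)" and Y: "Y \<in> conn_sets H"
  shows "\<exists>C\<in>max_conn_sets H. Y \<subseteq> C"
proof -
  let ?S = "{Z \<in> conn_sets H. Y \<subseteq> Z}"
  have "finite ?S" "?S \<noteq> {}" using finite_conn_sets[OF fin] Y by auto
  then obtain m where m: "m \<in> ?S" "\<forall>b\<in>?S. m \<subseteq> b \<longrightarrow> m = b"
    using finite_has_maximal[of ?S] by blast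
  hence "m \<in> max_conn_sets H" unfolding max_conn_sets_def by auto
  thus ?thesis using m(1) by blast
qed

text \<open>A connected set meeting a maximal one lies inside it, since their union is connected.\<close>
lemma conn_set_in_max:
  assumes ne: "\<forall>X\<in>H. X \<noteq> {}" and Y: "Y \<in> conn_sets H" and C: "C \<in> max_conn_sets H"
    and i: "Y \<inter> C \<noteq> {}"
  shows "Y \<subseteq> C"
proof -
  have "Y \<union> C \<in> conn_sets H" using conn_sets_Un[OF ne Y max_conn_sets_conn_sets[OF C] i] .
  moreover have "C \<subseteq> Y \<union> C" by blast
  ultimately have "Y \<union> C = C" using C unfolding max_conn_sets_def by simp
  thus ?thesis by blast
qed

lemma max_conn_sets_disjoint:
  assumes ne: "\<forall>X\<in>H. X \<noteq> {}" and C: "C1 \<in> max_conn_sets H" "C2 \<in> max_conn_sets H" "C1 \<noteq> C2"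
  shows "C1 \<inter> C2 = {}"
  using conn_set_in_max[OF ne max_conn_sets_conn_sets[OF C(1)] C(2)]
    conn_set_in_max[OF ne max_conn_sets_conn_sets[OF C(2)] C(1)] C(3) by blast

lemma Union_max_conn_sets:
  assumes ne: "\<forall>X\<in>H. X \<noteq> {}" and fin: "finite (\<Union>H)"
  shows "\<Union>(max_conn_sets H) = \<Union>H"
proof
  show "\<Union>(max_conn_sets H) \<subseteq> \<Union>H" using max_conn_sets_conn_sets conn_sets_subset by blast
  show "\<Union>H \<subseteq> \<Union>(max_conn_sets H)"
    using max_conn_set_exists[OF fin edge_in_conn_sets[OF ne]] by blast
qed

lemma max_conn_sets_connected:
  assumes "H \<noteq> {}" "\<forall>X\<in>H. X \<noteq> {}" "connected_hg H"
  shows "max_conn_sets H = {\<Union>H}"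
proof -
  have V: "\<Union>H \<in> conn_sets H" using connected_iff_carrier_conn_set assms by blast
  have "\<Union>H \<in> max_conn_sets H" unfolding max_conn_sets_def using V conn_sets_subset by blast
  moreover have "C = \<Union>H" if "C \<in> max_conn_sets H" for C
    using that V conn_sets_subset[of C H] unfolding max_conn_sets_def by blast
  ultimately show ?thesis by blast
qed

lemma max_conn_set_restr_self: "C \<in> max_conn_sets H \<Longrightarrow> C \<in> max_conn_sets (restr H C)"
  unfolding max_conn_sets_def conn_sets_restr by auto

lemma disconnected_max_conn_sets:
  assumes ne: "\<forall>X\<in>H. X \<noteq> {}" and fin: "finite (\<Union>H)" and "H \<noteq> {}" "\<not> connected_hg H"
  shows "2 \<le> card (max_conn_sets H)" and "C \<in> max_conn_sets H \<Longrightarrow> C \<subset> \<Union>H"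
proof -
  have proper: "C \<subset> \<Union>H" if C: "C \<in> max_conn_sets H" for C
  proof -
    have "C \<subseteq> \<Union>H" using conn_sets_subset max_conn_sets_conn_sets C by blast
    moreover have "C \<noteq> \<Union>H"
      using connected_iff_carrier_conn_set assms(3,4) ne max_conn_sets_conn_sets[OF C] by blast
    ultimately show ?thesis by blast
  qed
  thus "C \<in> max_conn_sets H \<Longrightarrow> C \<subset> \<Union>H" .
  have U: "\<Union>(max_conn_sets H) = \<Union>H" using Union_max_conn_sets[OF ne fin] .
  show "2 \<le> card (max_conn_sets H)"
  proof (rule ccontr)
    assume "\<not> 2 \<le> card (max_conn_sets H)"
    then consider "card (max_conn_sets H) = 0" | "card (max_conn_sets H) = 1" by linarith
    thus False
    proof cases
      case 1
      hence "\<Union>H = {}" using U finite_max_conn_sets[OF fin] by simp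
      thus False using assms(3) ne by blast
    next
      case 2
      then obtain C where "max_conn_sets H = {C}" by (rule card_1_singletonE)
      thus False using U proper by simp
    qed
  qed
qed

lemma max_conn_partition:
  assumes ne: "\<forall>X\<in>H. X \<noteq> {}" and fin: "finite (\<Union>H)"
  shows "hypergraph_partition H (restr H ` max_conn_sets H)"
    and "\<forall>B\<in>restr H ` max_conn_sets H. connected_hg B"
proof -
  have U: "\<Union>(restr H C) = C" if "C \<in> max_conn_sets H" for C
    using Union_restr_conn_set max_conn_sets_conn_sets that by blast
  have cov: "\<Union>(restr H ` max_conn_sets H) = H"
  proof
    show "\<Union>(restr H ` max_conn_sets H) \<subseteq> H" unfolding restr_def by auto
    show "H \<subseteq> \<Union>(restr H ` max_conn_sets H)"
    proof
      fix X assume X: "X \<in> H"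
      then obtain C where "C \<in> max_conn_sets H" "X \<subseteq> C"
        using max_conn_set_exists[OF fin edge_in_conn_sets[OF ne X]] by blast
      thus "X \<in> \<Union>(restr H ` max_conn_sets H)" using X unfolding restr_def by blast
    qed
  qed
  have "restr H C1 \<inter> restr H C2 = {} \<and> \<Union>(restr H C1) \<inter> \<Union>(restr H C2) = {}"
    if C: "C1 \<in> max_conn_sets H" "C2 \<in> max_conn_sets H" "restr H C1 \<noteq> restr H C2" for C1 C2
  proof -
    have d: "C1 \<inter> C2 = {}" using max_conn_sets_disjoint[OF ne C(1,2)] C(3) by blast
    hence "restr H C1 \<inter> restr H C2 = {}" using ne unfolding restr_def by blast
    thus ?thesis using d U[OF C(1)] U[OF C(2)] by simp
  qed
  moreover have "restr H C \<noteq> {}" if "C \<in> max_conn_sets H" for C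
    using U[OF that] conn_sets_nonempty[OF max_conn_sets_conn_sets[OF that]] by auto
  ultimately show "hypergraph_partition H (restr H ` max_conn_sets H)"
    using cov unfolding hypergraph_partition_def by auto
  show "\<forall>B\<in>restr H ` max_conn_sets H. connected_hg B"
    using max_conn_sets_conn_sets unfolding conn_sets_def by auto
qed

lemma partition_edge_outside_block:
  assumes hp: "hypergraph_partition H P" and B: "B \<in> P" and X: "X \<in> H" "X \<notin> B"
  shows "X \<inter> \<Union>B = {}"
proof -
  obtain B2 where B2: "B2 \<in> P" "X \<in> B2" using hp X(1) unfolding hypergraph_partition_def by auto
  hence "\<Union>B \<inter> \<Union>B2 = {}" using hp B X(2) unfolding hypergraph_partition_def by metis
  thus ?thesis using B2(2) by blast
qed

lemma partition_block_restr:
  assumes ne: "\<forall>X\<in>H. X \<noteq> {}" and hp: "hypergraph_partition H P" and B: "B \<in> P"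
  shows "restr H (\<Union>B) = B"
proof
  show "B \<subseteq> restr H (\<Union>B)" using hp B unfolding hypergraph_partition_def restr_def by auto
  show "restr H (\<Union>B) \<subseteq> B"
  proof
    fix X assume "X \<in> restr H (\<Union>B)"
    hence X: "X \<in> H" "X \<subseteq> \<Union>B" "X \<noteq> {}" using ne unfolding restr_def by auto
    thus "X \<in> B" using partition_edge_outside_block[OF hp B X(1)] by blast
  qed
qed

lemma partition_block_max:
  assumes ne: "\<forall>X\<in>H. X \<noteq> {}" and hp: "hypergraph_partition H P" and B: "B \<in> P"
    and con: "connected_hg B"
  shows "\<Union>B \<in> max_conn_sets H"
proof -
  have rB: "restr H (\<Union>B) = B" using partition_block_restr[OF ne hp B] .
  have bne: "B \<noteq> {}" and bsub: "B \<subseteq> H" using hp B unfolding hypergraph_partition_def by auto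
  hence cB: "\<Union>B \<in> conn_sets H" using con rB ne unfolding conn_sets_def by auto
  have "Y = \<Union>B" if Y: "Y \<in> conn_sets H" "\<Union>B \<subseteq> Y" for Y
  proof -
    have cY: "connected_hg (restr H Y)" "\<Union>(restr H Y) = Y" using Y(1) unfolding conn_sets_def by auto
    have BY: "B \<subseteq> restr H Y" using bsub Y(2) unfolding restr_def by auto
    have "\<Union>B \<inter> \<Union>(restr H Y - B) = {}"
      using partition_edge_outside_block[OF hp B] unfolding restr_def by blast
    hence "restr H Y \<subseteq> B \<or> restr H Y \<subseteq> restr H Y - B"
      using connected_in_split_side[OF cY(1), of B "restr H Y - B"] by blast
    hence "restr H Y \<subseteq> B" using BY bne by blast
    hence "Y \<subseteq> \<Union>B" using cY(2) by blast
    thus ?thesis using Y(2) by blast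
  qed
  thus ?thesis using cB unfolding max_conn_sets_def by blast
qed

lemma connected_partition_unique:
  assumes ne: "\<forall>X\<in>H. X \<noteq> {}"
    and hp: "hypergraph_partition H P" and con: "\<forall>B\<in>P. connected_hg B"
  shows "P = restr H ` max_conn_sets H"
proof
  show "P \<subseteq> restr H ` max_conn_sets H"
  proof
    fix B assume B: "B \<in> P"
    have "B = restr H (\<Union>B)" using partition_block_restr[OF ne hp B] by simp
    moreover have "\<Union>B \<in> max_conn_sets H" using partition_block_max[OF ne hp B] con B by blast
    ultimately show "B \<in> restr H ` max_conn_sets H" by blast
  qed
  show "restr H ` max_conn_sets H \<subseteq> P"
  proof
    fix B0 assume "B0 \<in> restr H ` max_conn_sets H"
    then obtain C where C: "C \<in> max_conn_sets H" "B0 = restr H C" by blast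
    have "\<Union>(restr H C) = C" "C \<noteq> {}"
      using max_conn_sets_conn_sets[OF C(1)] Union_restr_conn_set conn_sets_nonempty by blast+
    then obtain X where X: "X \<in> restr H C" by auto
    then obtain B where B: "B \<in> P" "X \<in> B" using hp unfolding hypergraph_partition_def restr_def by auto
    have "C \<inter> \<Union>B \<noteq> {}" using X B ne unfolding restr_def by auto
    moreover have "\<Union>B \<in> max_conn_sets H" using partition_block_max[OF ne hp B(1)] con B(1) by blast
    ultimately have "C = \<Union>B" using max_conn_sets_disjoint[OF ne C(1)] by blast
    thus "B0 \<in> P" using C partition_block_restr[OF ne hp B(1)] B by simp
  qed
qed

lemma finest_partition_eq:
  assumes ne: "\<forall>X\<in>H. X \<noteq> {}" and fin: "finite (\<Union>H)"
  shows "finest_partition H = restr H ` max_conn_sets H"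
  unfolding finest_partition_def
proof (rule the_equality)
  show "hypergraph_partition H (restr H ` max_conn_sets H) \<and>
      (\<forall>B\<in>restr H ` max_conn_sets H. connected_hg B)"
    using max_conn_partition[OF ne fin] by blast
  show "P = restr H ` max_conn_sets H" if "hypergraph_partition H P \<and> (\<forall>B\<in>P. connected_hg B)" for P
    using connected_partition_unique[OF ne] that by blast
qed

lemma inj_on_restr: "inj_on (restr H) (max_conn_sets H)"
  by (rule inj_onI) (metis Union_restr_conn_set max_conn_sets_conn_sets)

lemma components_eq:
  assumes ne: "\<forall>X\<in>H. X \<noteq> {}" and fin: "finite (\<Union>H)"
  shows "components H = max_conn_sets H"
  unfolding components_def finest_partition_eq[OF ne fin] image_image
  by (simp add: Union_restr_conn_set max_conn_sets_conn_sets cong: image_cong)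

lemma connectedness_number_eq:
  assumes ne: "\<forall>X\<in>H. X \<noteq> {}" and fin: "finite (\<Union>H)"
  shows "connectedness_number H = card (max_conn_sets H)"
  unfolding connectedness_number_def finest_partition_eq[OF ne fin]
  using card_image[OF inj_on_restr] .

lemma conn_sets_eq_carrier:
  assumes "\<forall>X\<in>H1. X \<noteq> {}" "\<forall>X\<in>H2. X \<noteq> {}" "conn_sets H1 = conn_sets H2"
  shows "\<Union>H1 = \<Union>H2"
  using Union_conn_sets assms by metis

lemma conn_sets_eq_connected:
  assumes ne: "\<forall>X\<in>H1. X \<noteq> {}" "\<forall>X\<in>H2. X \<noteq> {}" and CC: "conn_sets H1 = conn_sets H2"
  shows "connected_hg H1 \<longleftrightarrow> connected_hg H2"
proof (cases "H1 = {}")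
  case True
  hence "H2 = {}" using conn_sets_empty_iff ne CC by metis
  thus ?thesis using True by simp
next
  case False
  hence "H2 \<noteq> {}" using conn_sets_empty_iff ne CC by metis
  thus ?thesis using False connected_iff_carrier_conn_set ne CC conn_sets_eq_carrier[OF ne CC] by metis
qed

lemma conn_sets_eq_restr:
  "conn_sets H1 = conn_sets H2 \<Longrightarrow> conn_sets (restr H1 W) = conn_sets (restr H2 W)"
  unfolding conn_sets_restr by simp

lemma finest_partition_hypergraph:
  "hypergraph H \<Longrightarrow> finest_partition H = restr H ` max_conn_sets H"
  by (rule finest_partition_eq) (simp_all add: hypergraph_def)

lemma construction_by_components:
  assumes hH: "hypergraph H" and ncon: "\<not> connected_hg H"
    and KC: "\<And>C. C \<in> max_conn_sets H \<Longrightarrow> construction (restr H C) (KC C)"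
  shows "construction H (\<Union>C\<in>max_conn_sets H. KC C)"
proof -
  let ?M = "max_conn_sets H"
  have ne: "\<forall>X\<in>H. X \<noteq> {}" and fin: "finite (\<Union>H)" using hH unfolding hypergraph_def by auto
  have Hne: "H \<noteq> {}" using ncon connected_empty by blast
  have carrier: "\<Union>(restr H C) = C" if "C \<in> ?M" for C
    using Union_restr_conn_set max_conn_sets_conn_sets that by blast
  have "2 \<le> card (restr H ` ?M)"
    using disconnected_max_conn_sets(1)[OF ne fin Hne ncon] card_image[OF inj_on_restr, of H] by simp
  moreover have "\<forall>B\<in>restr H ` ?M. construction B (KC (\<Union>B))" using KC carrier by simp
  ultimately have "construction H (\<Union>B\<in>restr H ` ?M. KC (\<Union>B))"
    using construction.disconn[OF ncon finest_partition_hypergraph[OF hH], of "\<lambda>B. KC (\<Union>B)"] by blast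
  moreover have "(\<Union>B\<in>restr H ` ?M. KC (\<Union>B)) = (\<Union>C\<in>?M. KC C)" using carrier by simp
  ultimately show ?thesis by simp
qed

text \<open>The two construction steps
  are governed by the carrier, connectedness, restrictions and the finest partition,
  all of which are determined by the connected sets.\<close>
lemma construction_transfer:
  assumes "construction H1 K" "hypergraph H1" "hypergraph H2" "conn_sets H1 = conn_sets H2"
  shows "construction H2 K"
  using assms
proof (induction H1 K arbitrary: H2 rule: construction.induct)
  case empty
  have "\<forall>X\<in>H2. X \<noteq> {}" using empty.prems(2) unfolding hypergraph_def by simp
  hence "H2 = {}" using conn_sets_empty_iff conn_sets_empty empty.prems(3) by metis
  thus ?case using construction.empty by simp
next
  case (conn H x K)
  have ne: "\<forall>X\<in>H. X \<noteq> {}" "\<forall>X\<in>H2. X \<noteq> {}" using conn.prems unfolding hypergraph_def by auto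
  have V: "\<Union>H2 = \<Union>H" using conn_sets_eq_carrier[OF ne conn.prems(3)] by simp
  have "construction (restr H2 (\<Union>H - {x})) K"
    using conn.IH[OF hypergraph_restr[OF conn.prems(1)] hypergraph_restr[OF conn.prems(2)]
        conn_sets_eq_restr[OF conn.prems(3)]] .
  moreover have "connected_hg H2" using conn_sets_eq_connected[OF ne conn.prems(3)] conn.hyps(2) by simp
  ultimately show ?case using construction.conn[of H2 x K] conn.hyps(1,3) V by simp
next
  case (disconn H P K)
  have ne: "\<forall>X\<in>H. X \<noteq> {}" "\<forall>X\<in>H2. X \<noteq> {}" using disconn.prems unfolding hypergraph_def by auto
  have M: "max_conn_sets H2 = max_conn_sets H" using max_conn_sets_cong[OF disconn.prems(3)] by simp
  have P: "P = restr H ` max_conn_sets H"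
    using disconn.hyps(2) finest_partition_hypergraph[OF disconn.prems(1)] by simp
  have nc: "\<not> connected_hg H2" using conn_sets_eq_connected[OF ne disconn.prems(3)] disconn.hyps(1) by simp
  have "construction (restr H2 C) (K (restr H C))" if C: "C \<in> max_conn_sets H2" for C
  proof -
    have "restr H C \<in> P" using P C M by simp
    hence IH: "\<And>G. hypergraph (restr H C) \<Longrightarrow> hypergraph G \<Longrightarrow> conn_sets (restr H C) = conn_sets G
        \<Longrightarrow> construction G (K (restr H C))"
      using disconn.IH by blast
    show ?thesis
      using IH[OF hypergraph_restr[OF disconn.prems(1)] hypergraph_restr[OF disconn.prems(2)]
          conn_sets_eq_restr[OF disconn.prems(3)]] .
  qed
  hence "construction H2 (\<Union>C\<in>max_conn_sets H2. K (restr H C))"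
    by (rule construction_by_components[OF disconn.prems(2) nc])
  thus ?case using P M by simp
qed

lemma construction_conn_sets:
  assumes "construction H K" "hypergraph H"
  shows "K \<subseteq> conn_sets H"
  using assms
proof (induction H K rule: construction.induct)
  case empty
  thus ?case by simp
next
  case (conn H x K)
  have "K \<subseteq> conn_sets (restr H (\<Union>H - {x}))" using conn.IH[OF hypergraph_restr[OF conn.prems]] .
  hence KH: "K \<subseteq> conn_sets H" unfolding conn_sets_restr by blast
  have Hne: "H \<noteq> {}" using conn.hyps(1) by auto
  have ne: "\<forall>X\<in>H. X \<noteq> {}" using conn.prems unfolding hypergraph_def by simp
  have "\<Union>H \<in> conn_sets H" using connected_iff_carrier_conn_set[OF Hne ne] conn.hyps(2) by simp
  with KH show ?case by simp
next
  case (disconn H P K)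
  have P: "P = restr H ` max_conn_sets H"
    using disconn.hyps(2) finest_partition_hypergraph[OF disconn.prems] by simp
  show ?case
  proof (rule UN_least)
    fix B assume B: "B \<in> P"
    then obtain C where B_def: "B = restr H C" using P by blast
    have "hypergraph B" using hypergraph_restr[OF disconn.prems] B_def by simp
    hence "K B \<subseteq> conn_sets (restr H C)" using bspec[OF disconn.IH B] B_def by simp
    thus "K B \<subseteq> conn_sets H" unfolding conn_sets_restr by blast
  qed
qed

lemma construction_components:
  assumes "construction H K" "hypergraph H"
  shows "max_conn_sets H \<subseteq> K"
  using assms
proof (induction H K rule: construction.induct)
  case empty
  thus ?case by (simp add: max_conn_sets_def conn_sets_empty)
next
  case (conn H x K)
  have "H \<noteq> {}" using conn.hyps(1) by auto
  moreover have "\<forall>X\<in>H. X \<noteq> {}" using conn.prems unfolding hypergraph_def by simp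
  ultimately show ?case using max_conn_sets_connected[OF _ _ conn.hyps(2)] by simp
next
  case (disconn H P K)
  have P: "P = restr H ` max_conn_sets H"
    using disconn.hyps(2) finest_partition_hypergraph[OF disconn.prems] by simp
  show ?case
  proof
    fix C assume C: "C \<in> max_conn_sets H"
    hence B: "restr H C \<in> P" using P by simp
    hence "max_conn_sets (restr H C) \<subseteq> K (restr H C)"
      using bspec[OF disconn.IH] hypergraph_restr[OF disconn.prems] by simp
    hence "C \<in> K (restr H C)" using max_conn_set_restr_self[OF C] by blast
    thus "C \<in> (\<Union>B\<in>P. K B)" using B by blast
  qed
qed

lemma finite_construction:
  assumes "construction H K" "hypergraph H" shows "finite K"
proof -
  have "finite (\<Union>H)" using assms(2) unfolding hypergraph_def by simp
  thus ?thesis using finite_subset[OF construction_conn_sets[OF assms] finite_conn_sets] by simp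
qed

lemma atomic_Union_restr:
  assumes "atomic H" shows "\<Union>(restr H (\<Union>H - {x})) = \<Union>H - {x}"
proof
  show "\<Union>(restr H (\<Union>H - {x})) \<subseteq> \<Union>H - {x}" unfolding restr_def by auto
  show "\<Union>H - {x} \<subseteq> \<Union>(restr H (\<Union>H - {x}))"
  proof
    fix y assume y: "y \<in> \<Union>H - {x}"
    hence "{y} \<in> H" using assms unfolding atomic_def by blast
    thus "y \<in> \<Union>(restr H (\<Union>H - {x}))" using y unfolding restr_def by blast
  qed
qed

text \<open>Constructions of the components, each as large as its component, have a union as
  large as the carrier: they are disjoint because their members are nonempty subsets of
  pairwise disjoint components.\<close>
lemma card_UN_component_constructions:
  assumes hH: "hypergraph H"
    and KC: "\<And>C. C \<in> max_conn_sets H \<Longrightarrow> construction (restr H C) (KC C)"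
    and card: "\<And>C. C \<in> max_conn_sets H \<Longrightarrow> card (KC C) = card C"
  shows "card (\<Union>C\<in>max_conn_sets H. KC C) = card (\<Union>H)"
proof -
  let ?M = "max_conn_sets H"
  have ne: "\<forall>X\<in>H. X \<noteq> {}" and fin: "finite (\<Union>H)" using hH unfolding hypergraph_def by auto
  have hC: "hypergraph (restr H C)" for C using hypergraph_restr[OF hH] .
  have disj: "KC C1 \<inter> KC C2 = {}" if C: "C1 \<in> ?M" "C2 \<in> ?M" "C1 \<noteq> C2" for C1 C2
  proof -
    have sub: "KC C \<subseteq> {Y \<in> conn_sets H. Y \<subseteq> C}" if "C \<in> ?M" for C
      using construction_conn_sets[OF KC[OF that] hC] unfolding conn_sets_restr .
    have "Y \<subseteq> C1 \<inter> C2" "Y \<noteq> {}" if "Y \<in> KC C1" "Y \<in> KC C2" for Y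
      using that sub[OF C(1)] sub[OF C(2)] conn_sets_nonempty by blast+
    thus ?thesis using max_conn_sets_disjoint[OF ne C] by blast
  qed
  have "card (\<Union>C\<in>?M. KC C) = (\<Sum>C\<in>?M. card (KC C))"
    by (rule card_UN_disjoint[OF finite_max_conn_sets[OF fin]])
      (use finite_construction[OF KC hC] disj in blast)+
  also have "\<dots> = (\<Sum>C\<in>?M. card C)" using card by simp
  also have "\<dots> = card (\<Union>?M)"
  proof (rule card_Union_disjoint[symmetric])
    show "pairwise disjnt ?M"
      using max_conn_sets_disjoint[OF ne] unfolding pairwise_def disjnt_def by blast
    show "finite C" if "C \<in> ?M" for C
      using finite_subset[OF conn_sets_subset[OF max_conn_sets_conn_sets[OF that]] fin] .
  qed
  also have "\<Union>?M = \<Union>H" using Union_max_conn_sets[OF ne fin] .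
  finally show ?thesis .
qed

text \<open>A construction of an atomic hypergraph has as many members as the carrier has
  vertices: a step (1) adds one set and removes one vertex (atomicity ensures that
  exactly one vertex disappears), and a step (2) adds up the counts of the components.\<close>
lemma construction_card:
  assumes "construction H K" "hypergraph H" "atomic H"
  shows "card K = card (\<Union>H)"
  using assms
proof (induction H K rule: construction.induct)
  case empty
  thus ?case by simp
next
  case (conn H x K)
  let ?R = "restr H (\<Union>H - {x})"
  have hR: "hypergraph ?R" using hypergraph_restr[OF conn.prems(1)] .
  have "card K = card (\<Union>?R)" using conn.IH[OF hR atomic_restr[OF conn.prems(2)]] .
  also have "\<dots> = card (\<Union>H - {x})" by (simp only: atomic_Union_restr[OF conn.prems(2)])
  finally have IH: "card K = card (\<Union>H - {x})" .
  have "K \<subseteq> conn_sets ?R" using construction_conn_sets[OF conn.hyps(4) hR] .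
  hence "\<forall>Y\<in>K. Y \<subseteq> \<Union>H - {x}" unfolding conn_sets_restr by blast
  hence "\<Union>H \<notin> K" using conn.hyps(3) by (metis Diff_iff insertI1 subsetD)
  hence "card (insert (\<Union>H) K) = Suc (card (\<Union>H - {x}))"
    using IH finite_construction[OF conn.hyps(4) hR] by simp
  also have "\<dots> = card (\<Union>H)"
    using conn.hyps(3) conn.prems(1) card_Suc_Diff1 unfolding hypergraph_def by metis
  finally show ?case .
next
  case (disconn H P K)
  have P: "P = restr H ` max_conn_sets H"
    using disconn.hyps(2) finest_partition_hypergraph[OF disconn.prems(1)] by simp
  have IH: "construction (restr H C) (K (restr H C)) \<and> (hypergraph (restr H C) \<longrightarrow>
      atomic (restr H C) \<longrightarrow> card (K (restr H C)) = card (\<Union>(restr H C)))"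
    if "C \<in> max_conn_sets H" for C
    using disconn.IH that P by blast
  have "card (\<Union>C\<in>max_conn_sets H. K (restr H C)) = card (\<Union>H)"
  proof (rule card_UN_component_constructions[OF disconn.prems(1)])
    show "construction (restr H C) (K (restr H C))" if "C \<in> max_conn_sets H" for C
      using IH[OF that] by simp
    show "card (K (restr H C)) = card C" if C: "C \<in> max_conn_sets H" for C
      using IH[OF C] hypergraph_restr[OF disconn.prems(1)] atomic_restr[OF disconn.prems(2)]
        Union_restr_conn_set[OF max_conn_sets_conn_sets[OF C]] by simp
  qed
  thus ?case using P by simp
qed

text \<open>For connected H, a step (1) removing a vertex outside Y keeps Y
  connected in the restriction; for disconnected H, Y lies in a single component.\<close>
lemma construction_exists_connected_step:
  assumes hH: "hypergraph H" and at: "atomic H" and Hne: "H \<noteq> {}" and con: "connected_hg H"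
    and IH: "\<And>G. hypergraph G \<Longrightarrow> atomic G \<Longrightarrow> card (\<Union>G) < card (\<Union>H) \<Longrightarrow>
               \<exists>K. construction G K \<and> (Y \<in> conn_sets G \<longrightarrow> Y \<in> K)"
  shows "\<exists>K. construction H K \<and> (Y \<in> conn_sets H \<longrightarrow> Y \<in> K)"
proof -
  have ne: "\<forall>X\<in>H. X \<noteq> {}" and fin: "finite (\<Union>H)" using hH unfolding hypergraph_def by auto
  have Vne: "\<Union>H \<noteq> {}" using Hne ne by auto
  obtain z where z: "z \<in> \<Union>H" "Y \<in> conn_sets H \<and> Y \<noteq> \<Union>H \<longrightarrow> Y \<subseteq> \<Union>H - {z}"
  proof (cases "Y \<in> conn_sets H \<and> Y \<noteq> \<Union>H")
    case True
    then obtain z where "z \<in> \<Union>H - Y" using conn_sets_subset by blast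
    thus ?thesis using that True conn_sets_subset by blast
  next
    case False
    thus ?thesis using that Vne by blast
  qed
  let ?R = "restr H (\<Union>H - {z})"
  have "card (\<Union>?R) < card (\<Union>H)"
    using atomic_Union_restr[OF at] card_Diff1_less[OF fin z(1)] by simp
  then obtain K where K: "construction ?R K" "Y \<in> conn_sets ?R \<longrightarrow> Y \<in> K"
    using IH hypergraph_restr[OF hH] atomic_restr[OF at] by blast
  have "card (\<Union>H) \<ge> 1" using Vne fin by (simp add: Suc_le_eq card_gt_0_iff)
  hence "construction H (insert (\<Union>H) K)" using construction.conn[OF _ con z(1) K(1)] by simp
  moreover have "Y \<in> insert (\<Union>H) K" if "Y \<in> conn_sets H"
    using that z(2) K(2) unfolding conn_sets_restr by blast
  ultimately show ?thesis by blast
qed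

lemma construction_exists_disconnected_step:
  assumes hH: "hypergraph H" and ncon: "\<not> connected_hg H"
    and IH: "\<And>C. C \<in> max_conn_sets H \<Longrightarrow>
               \<exists>K. construction (restr H C) K \<and> (Y \<in> conn_sets (restr H C) \<longrightarrow> Y \<in> K)"
  shows "\<exists>K. construction H K \<and> (Y \<in> conn_sets H \<longrightarrow> Y \<in> K)"
proof -
  have fin: "finite (\<Union>H)" using hH unfolding hypergraph_def by auto
  let ?M = "max_conn_sets H"
  define KC where "KC C = (SOME K. construction (restr H C) K \<and> (Y \<in> conn_sets (restr H C) \<longrightarrow> Y \<in> K))"
    for C
  have KC: "construction (restr H C) (KC C) \<and> (Y \<in> conn_sets (restr H C) \<longrightarrow> Y \<in> KC C)"
    if "C \<in> ?M" for C
    using IH[OF that] unfolding KC_def by (rule someI_ex)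
  have "construction H (\<Union>C\<in>?M. KC C)" using construction_by_components[OF hH ncon] KC by blast
  moreover have "Y \<in> (\<Union>C\<in>?M. KC C)" if Y: "Y \<in> conn_sets H"
  proof -
    obtain C where C: "C \<in> ?M" "Y \<subseteq> C" using max_conn_set_exists[OF fin Y] by blast
    hence "Y \<in> conn_sets (restr H C)" unfolding conn_sets_restr using Y by blast
    thus ?thesis using KC C(1) by blast
  qed
  ultimately show ?thesis by blast
qed

lemma construction_exists:
  assumes "hypergraph H" "atomic H"
  shows "\<exists>K. construction H K \<and> (Y \<in> conn_sets H \<longrightarrow> Y \<in> K)"
  using assms
proof (induction "card (\<Union>H)" arbitrary: H rule: less_induct)
  case less
  have ne: "\<forall>X\<in>H. X \<noteq> {}" and fin: "finite (\<Union>H)" using less.prems(1) unfolding hypergraph_def by auto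
  consider "H = {}" | "H \<noteq> {}" "connected_hg H" | "H \<noteq> {}" "\<not> connected_hg H" by blast
  thus ?case
  proof cases
    case 1
    thus ?thesis using construction.empty conn_sets_empty by blast
  next
    case 2
    thus ?thesis using construction_exists_connected_step[OF less.prems] less.hyps by blast
  next
    case 3
    have "card C < card (\<Union>H)" if "C \<in> max_conn_sets H" for C
      using psubset_card_mono[OF fin disconnected_max_conn_sets(2)[OF ne fin 3 that]] .
    hence "\<exists>K. construction (restr H C) K \<and> (Y \<in> conn_sets (restr H C) \<longrightarrow> Y \<in> K)"
      if "C \<in> max_conn_sets H" for C
      using less.hyps[of "restr H C"] that hypergraph_restr[OF less.prems(1)] atomic_restr[OF less.prems(2)]
        Union_restr_conn_set[OF max_conn_sets_conn_sets[OF that]] by simp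
    thus ?thesis using construction_exists_disconnected_step[OF less.prems(1) 3(2)] by blast
  qed
qed

lemma construct_iff:
  assumes "hypergraph H"
  shows "construct H C \<longleftrightarrow> (\<exists>K. construction H K \<and> C \<subseteq> K) \<and> max_conn_sets H \<subseteq> C"
proof -
  have "components H = max_conn_sets H" using components_eq assms unfolding hypergraph_def by blast
  thus ?thesis unfolding construct_def by simp
qed

lemma construct_conn_sets:
  assumes "construct H C" "hypergraph H" shows "C \<subseteq> conn_sets H"
  using assms construction_conn_sets unfolding construct_def by blast

text \<open>Any connected set lies in a construct of any cardinality m strictly between the number
  of components and the size of the carrier: take a construction through Y (it has
  card (carrier) members and contains the components) and keep Y, the components,
  and enough further members.\<close>
lemma construct_through:
  assumes hH: "hypergraph H" and at: "atomic H" and Y: "Y \<in> conn_sets H"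
    and m: "card (max_conn_sets H) < m" "m \<le> card (\<Union>H)"
  shows "\<exists>C. construct H C \<and> card C = m \<and> Y \<in> C"
proof -
  obtain K where K: "construction H K" "Y \<in> K" using construction_exists[OF hH at] Y by blast
  have comps: "max_conn_sets H \<subseteq> K" using construction_components[OF K(1) hH] .
  have finK: "finite K" and cardK: "card K = card (\<Union>H)"
    using finite_construction[OF K(1) hH] construction_card[OF K(1) hH at] by auto
  define S0 where "S0 = insert Y (max_conn_sets H)"
  have S0K: "S0 \<subseteq> K" unfolding S0_def using comps K(2) by blast
  have fS0: "finite S0" using finite_subset[OF S0K finK] .
  have "card S0 \<le> m" using m(1) card_insert_le_m1[of m "max_conn_sets H" Y] unfolding S0_def by linarith
  moreover have "m - card S0 \<le> card (K - S0)" using m(2) cardK card_Diff_subset[OF fS0 S0K] by simp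
  then obtain T where T: "T \<subseteq> K - S0" "card T = m - card S0" "finite T"
    by (rule obtain_subset_with_card_n)
  ultimately have "card (S0 \<union> T) = m" using card_Un_disjoint[OF fS0 T(3)] T(1,2) by auto
  moreover have "construct H (S0 \<union> T)"
    unfolding construct_iff[OF hH] using K(1) S0K T(1) unfolding S0_def by blast
  moreover have "Y \<in> S0 \<union> T" unfolding S0_def by simp
  ultimately show ?thesis by blast
qed

lemma conn_sets_saturated: "\<forall>X\<in>H. X \<noteq> {} \<Longrightarrow> saturated (conn_sets H)"
  unfolding saturated_def using conn_sets_Un by blast

lemma conn_sets_hypergraph: "hypergraph H \<Longrightarrow> hypergraph (conn_sets H)"
  unfolding hypergraph_def using finite_conn_sets Union_conn_sets conn_sets_nonempty by metis

text \<open>In a saturated family S, the union of a connected finite subfamily belongs to S: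
  a maximal subfamily whose union lies in S cannot be split off from the rest.\<close>
lemma saturated_Union_connected:
  assumes sat: "saturated S" and fin: "finite G" and GS: "G \<subseteq> S" and Gne: "G \<noteq> {}"
    and con: "connected_hg G"
  shows "\<Union>G \<in> S"
proof -
  let ?T = "{F. F \<subseteq> G \<and> F \<noteq> {} \<and> \<Union>F \<in> S}"
  have fT: "finite ?T" using fin by (simp add: finite_subset[of _ "Pow G"])
  obtain X where "X \<in> G" using Gne by blast
  hence "{X} \<in> ?T" using GS by auto
  hence "?T \<noteq> {}" by blast
  from finite_has_maximal[OF fT this]
  obtain F where F: "F \<in> ?T" "\<forall>F'\<in>?T. F \<subseteq> F' \<longrightarrow> F = F'" ..
  have dis: "\<Union>F \<inter> \<Union>(G - F) = {}"
  proof (rule ccontr)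
    assume "\<Union>F \<inter> \<Union>(G - F) \<noteq> {}"
    then obtain Z where Z: "Z \<in> G" "Z \<notin> F" "\<Union>F \<inter> Z \<noteq> {}" by blast
    hence "\<Union>F \<union> Z \<in> S" using sat F(1) GS unfolding saturated_def by blast
    hence "insert Z F \<in> ?T" using Z(1) F(1) by (simp add: Un_commute)
    hence "F \<subseteq> insert Z F \<longrightarrow> F = insert Z F" by (rule bspec[OF F(2)])
    hence "F = insert Z F" by blast
    thus False using Z(2) by blast
  qed
  have "G \<subseteq> F \<or> G \<subseteq> G - F"
    using connected_in_split_side[OF con _ dis] by blast
  hence "F = G" using F(1) by blast
  thus ?thesis using F(1) by simp
qed

lemma saturated_conn_sets_self:
  assumes "hypergraph S" "saturated S" shows "conn_sets S = S"
proof
  have ne: "\<forall>X\<in>S. X \<noteq> {}" and fin: "finite S" using assms(1) unfolding hypergraph_def by auto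
  show "S \<subseteq> conn_sets S" using edge_in_conn_sets[OF ne] by blast
  show "conn_sets S \<subseteq> S"
  proof
    fix Y assume "Y \<in> conn_sets S"
    hence c: "Y \<noteq> {}" "connected_hg (restr S Y)" "\<Union>(restr S Y) = Y" unfolding conn_sets_def by auto
    have "\<Union>(restr S Y) \<in> S"
    proof (rule saturated_Union_connected[OF assms(2) _ _ _ c(2)])
      show "finite (restr S Y)" using fin unfolding restr_def by simp
      show "restr S Y \<subseteq> S" unfolding restr_def by auto
      show "restr S Y \<noteq> {}" using c(1,3) by auto
    qed
    thus "Y \<in> S" using c(3) by simp
  qed
qed

text \<open>Adding a dispensable set does not change the connected sets, since a dispensable set
  is itself connected.\<close>
lemma add_dispensable_conn_sets:
  assumes "add_dispensable G G'" "\<forall>X\<in>G. X \<noteq> {}"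
  shows "conn_sets G' = conn_sets G \<and> (\<forall>X\<in>G'. X \<noteq> {})"
proof -
  obtain Y where Y: "Y \<noteq> {}" "dispensable G Y" "G' = G \<union> {Y}"
    using assms(1) unfolding add_dispensable_def by blast
  have d: "connected_hg (restr G Y - {Y})" "\<Union>(restr G Y - {Y}) = Y"
    using Y(2) unfolding dispensable_def by auto
  have u: "\<Union>(restr G Y) = Y" using d(2) unfolding restr_def by blast
  have "connected_hg (restr G Y)"
    by (rule connected_superset[OF d(1)]) (use u d(2) assms(2) in \<open>auto simp: restr_def\<close>)
  hence "Y \<in> conn_sets G" using u Y(1) unfolding conn_sets_def by simp
  hence "conn_sets (G \<union> {Y}) = conn_sets G"
    using conn_sets_between[OF assms(2)] edge_in_conn_sets[OF assms(2)] by blast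
  thus ?thesis using Y assms(2) by simp
qed

lemma cognate_conn_sets:
  assumes "cognate H S" "\<forall>X\<in>H. X \<noteq> {}"
  shows "conn_sets S = conn_sets H \<and> (\<forall>X\<in>S. X \<noteq> {})"
  using assms(1) unfolding cognate_def
proof (induction rule: rtranclp_induct)
  case base
  thus ?case using assms(2) by simp
next
  case (step y z)
  from step.hyps(2) consider "add_dispensable y z" | "add_dispensable z y" by auto
  thus ?case
  proof cases
    case 1
    thus ?thesis using add_dispensable_conn_sets step.IH by metis
  next
    case 2
    then obtain Y where "y = z \<union> {Y}" unfolding add_dispensable_def by blast
    hence "\<forall>X\<in>z. X \<noteq> {}" using step.IH by blast
    thus ?thesis using add_dispensable_conn_sets[OF 2] step.IH by simp
  qed
qed

text \<open>H is cognate to conn_sets H: add the missing connected sets one at a time; each is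
  dispensable because adding connected sets keeps the family of connected sets fixed.\<close>
lemma cognate_conn_sets_closure:
  assumes hH: "hypergraph H"
  shows "cognate H (conn_sets H)"
proof -
  have ne: "\<forall>X\<in>H. X \<noteq> {}" and fin: "finite (\<Union>H)" using hH unfolding hypergraph_def by auto
  have fC: "finite (conn_sets H)" using finite_conn_sets[OF fin] .
  have "cognate G (conn_sets H)" if "H \<subseteq> G" "G \<subseteq> conn_sets H" "n = card (conn_sets H - G)" for n G
    using that
  proof (induction n arbitrary: G)
    case 0
    hence "G = conn_sets H" using fC by auto
    thus ?case unfolding cognate_def by simp
  next
    case (Suc n)
    hence "conn_sets H - G \<noteq> {}" by auto
    then obtain Y where Y: "Y \<in> conn_sets H" "Y \<notin> G" by blast
    have CG: "conn_sets G = conn_sets H" using conn_sets_between[OF ne Suc.prems(1,2)] .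
    have YG: "Y \<in> conn_sets G" using CG Y(1) by simp
    have "restr G Y - {Y} = restr G Y" using Y(2) unfolding restr_def by blast
    hence "dispensable G Y"
      using YG conn_sets_subset[OF YG] unfolding dispensable_def conn_sets_def by simp
    hence step: "add_dispensable G (G \<union> {Y})"
      unfolding add_dispensable_def using conn_sets_nonempty[OF Y(1)] by blast
    have "cognate (G \<union> {Y}) (conn_sets H)"
    proof (rule Suc.IH)
      show "H \<subseteq> G \<union> {Y}" "G \<union> {Y} \<subseteq> conn_sets H" using Suc.prems(1,2) Y(1) by auto
      have "conn_sets H - (G \<union> {Y}) = (conn_sets H - G) - {Y}" by blast
      thus "n = card (conn_sets H - (G \<union> {Y}))" using Suc.prems(3) Y fC by simp
    qed
    thus ?case unfolding cognate_def using step
      by (metis (no_types, lifting) converse_rtranclp_into_rtranclp sup2I1)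
  qed
  moreover have "H \<subseteq> conn_sets H" using edge_in_conn_sets[OF ne] by blast
  ultimately show ?thesis by blast
qed

lemma sat_closure_eq_conn_sets:
  assumes "hypergraph H" shows "sat_closure H = conn_sets H"
  unfolding sat_closure_def
proof (rule the_equality)
  have ne: "\<forall>X\<in>H. X \<noteq> {}" using assms unfolding hypergraph_def by simp
  show "hypergraph (conn_sets H) \<and> saturated (conn_sets H) \<and> cognate H (conn_sets H)"
    using conn_sets_hypergraph[OF assms] conn_sets_saturated[OF ne] cognate_conn_sets_closure[OF assms]
    by simp
  fix S assume S: "hypergraph S \<and> saturated S \<and> cognate H S"
  hence "conn_sets S = conn_sets H" using cognate_conn_sets[OF _ ne] by blast
  thus "S = conn_sets H" using saturated_conn_sets_self S by metis
qed

lemma A_poset_conn_sets: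
  assumes h1: "hypergraph H1" and h2: "hypergraph H2" and CC: "conn_sets H1 = conn_sets H2"
  shows "A_poset H1 = A_poset H2"
proof -
  have "construction H1 K \<longleftrightarrow> construction H2 K" for K
    using construction_transfer[OF _ h1 h2 CC] construction_transfer[OF _ h2 h1 CC[symmetric]] by blast
  hence "construct H1 C \<longleftrightarrow> construct H2 C" for C
    unfolding construct_iff[OF h1] construct_iff[OF h2] max_conn_sets_cong[OF CC] by simp
  moreover have "satstar H1 = satstar H2"
    unfolding satstar_def sat_closure_eq_conn_sets[OF h1] sat_closure_eq_conn_sets[OF h2] CC ..
  ultimately show ?thesis unfolding A_poset_def by simp
qed

lemma sat_closure_of_satstar:
  assumes "satstar H1 = satstar H2" shows "sat_closure H1 = sat_closure H2"
proof -
  have "Some ` sat_closure H1 = Some ` sat_closure H2"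
    using assms unfolding satstar_def by (metis Diff_insert_absorb image_iff option.distinct(1))
  thus ?thesis by (simp add: inj_image_eq_iff)
qed

lemma faces_mem:
  assumes "0 \<le> k" "k \<le> A_rank H"
  shows "Some ` C \<in> faces H k \<longleftrightarrow> construct H C \<and> int (card C) = int (card (\<Union>H)) - k"
  using assms unfolding faces_def by (auto simp: inj_image_eq_iff)

lemma Union_faces:
  assumes hH: "hypergraph H" and at: "atomic H" and k: "0 \<le> k" "k \<le> A_rank H - 1"
  shows "\<Union>{C. Some ` C \<in> faces H k} = conn_sets H"
proof
  have rank: "k \<le> A_rank H" using k(2) by simp
  show "\<Union>{C. Some ` C \<in> faces H k} \<subseteq> conn_sets H"
  proof (rule Union_least)
    fix C assume "C \<in> {C. Some ` C \<in> faces H k}"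
    hence "construct H C" using faces_mem[OF k(1) rank] by simp
    thus "C \<subseteq> conn_sets H" using construct_conn_sets[OF _ hH] by blast
  qed
  show "conn_sets H \<subseteq> \<Union>{C. Some ` C \<in> faces H k}"
  proof
    fix Y assume Y: "Y \<in> conn_sets H"
    have "connectedness_number H = card (max_conn_sets H)"
      by (rule connectedness_number_eq) (use hH in \<open>simp_all add: hypergraph_def\<close>)
    hence "A_rank H = int (card (\<Union>H)) - int (card (max_conn_sets H))" unfolding A_rank_def by simp
    hence "k \<le> int (card (\<Union>H))"
      and "card (max_conn_sets H) < nat (int (card (\<Union>H)) - k)" "nat (int (card (\<Union>H)) - k) \<le> card (\<Union>H)"
      using k by linarith+
    moreover obtain C where C: "construct H C" "card C = nat (int (card (\<Union>H)) - k)" "Y \<in> C"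
      using construct_through[OF hH at Y] calculation(2,3) by blast
    ultimately have "Some ` C \<in> faces H k" using faces_mem[OF k(1) rank] by simp
    thus "Y \<in> \<Union>{C. Some ` C \<in> faces H k}" using C(3) by blast
  qed
qed

theorem proposition5p3:
  fixes H1 H2 :: "'a set set" and k :: int
  assumes "hypergraph H1" and "atomic H1"
    and "hypergraph H2" and "atomic H2"
    and "-1 \<le> k" and "k \<le> min (A_rank H1) (A_rank H2) - 1"
    and "faces H1 k = faces H2 k"
  shows "A_poset H1 = A_poset H2"
proof -
  have "conn_sets H1 = conn_sets H2"
  proof (cases "k = -1")
    case True
    hence "satstar H1 = satstar H2" using assms(7) unfolding faces_def by simp
    thus ?thesis using sat_closure_of_satstar sat_closure_eq_conn_sets assms(1,3) by metis
  next
    case False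
    hence k0: "0 \<le> k" using assms(5) by simp
    have r: "k \<le> A_rank H1 - 1" "k \<le> A_rank H2 - 1" using assms(6) by simp_all
    have "conn_sets H1 = \<Union>{C. Some ` C \<in> faces H1 k}" using Union_faces[OF assms(1,2) k0 r(1)] ..
    also have "\<dots> = conn_sets H2" using Union_faces[OF assms(3,4) k0 r(2)] assms(7) by simp
    finally show ?thesis .
  qed
  thus ?thesis using A_poset_conn_sets assms(1,3) by blast
qed

end
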